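(* Let $\mathbf v\in\mathbb Z^4$ be nonzero and $\mathcal A[\mathbf v]=\{\mathbf U\mathbf v:\mathbf U\in\mathcal A\}$. (1) If $\mathcal A[\mathbf v]$ contains an exceptional quadruple, then it contains elements $\mathbf v_1,\mathbf v_2$ with $L(\mathbf v_1)>0$ and $L(\mathbf v_2)<0$. (2) There exist orbits $\mathcal A[\mathbf v]$ containing more than one exceptional quadruple. (3) Exceptional quadruples $\mathbf a$ with $Q_{\mathcal D}(\mathbf a)=k$ exist only for $k\ge1$; for each $k\ge1$ there are only finitely many exceptional quadruples $\mathbf a$ with $Q_{\mathcal D}(\mathbf a)=k$, and all satisfy $H(\mathbf a)^2\le 2k^2$.
   Context: $Q_{\mathcal D}(a,b,c,d)=2(a^2+b^2+c^2+d^2)-(a+b+c+d)^2$; $H(\mathbf a)=(a^2+b^2+c^2+d^2)^{1/2}$; $L(\mathbf a)=a+b+c+d$; $|\mathbf a|=|a|+|b|+|c|+|d|$. $\mathbf S_i$ ($i=1,\dots,4$) is the integer matrix replacing the $i$-th coordinate $a_i$ of a quadruple by $2\sum_{j\ne i}a_j-a_i$, other coordinates fixed; the Apollonian group $\mathcal A$ is the subgroup of $GL(4,\mathbb Z)$ they generate. An integer quadruple is reduced if no $\mathbf S_i$ strictly decreases $|\cdot|$. A reduced quadruple ordered as $a\le b\le c\le d$ with $L\ge0$ is exceptional if $a+b+c\le 0<d$ (and a root quadruple if $a+b+c\ge d>0$); a reduced quadruple with $L<0$ is exceptional iff $(-d,-c,-b,-a)$ is. *)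

theory Defs
  imports "HOL-Analysis.Analysis"
begin

text \<open>Integer quadruples are vectors in int^4, indexed by the numeral type 4
  (indices 0,1,2,3).\<close>

type_synonym quad = "int ^ 4"

definition QD :: "quad \<Rightarrow> int" where
  "QD v = 2 * (\<Sum>i\<in>UNIV. (v $ i)^2) - (\<Sum>i\<in>UNIV. v $ i)^2"

definition Hh :: "quad \<Rightarrow> real" where
  "Hh v = sqrt (real_of_int (\<Sum>i\<in>UNIV. (v $ i)^2))"

definition LL :: "quad \<Rightarrow> int" where
  "LL v = (\<Sum>i\<in>UNIV. v $ i)"

definition norm1 :: "quad \<Rightarrow> int" where
  "norm1 v = (\<Sum>i\<in>UNIV. \<bar>v $ i\<bar>)"

definition Smat :: "4 \<Rightarrow> int ^ 4 ^ 4" where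
  "Smat i = (\<chi> r c. if r = i then (if c = i then -1 else 2)
                     else (if r = c then 1 else 0))"

text \<open>Since each S_i is an involution, the submonoid generated by the S_i is
  already closed under inverses, so it is the generated subgroup.\<close>
inductive_set apollonian_group :: "(int ^ 4 ^ 4) set" where
  id_in: "mat 1 \<in> apollonian_group"
| step: "U \<in> apollonian_group \<Longrightarrow> Smat i ** U \<in> apollonian_group"

definition orbit :: "quad \<Rightarrow> quad set" where
  "orbit v = {U *v v | U. U \<in> apollonian_group}"

definition reduced :: "quad \<Rightarrow> bool" where
  "reduced v \<longleftrightarrow> (\<forall>i. \<not> norm1 (Smat i *v v) < norm1 v)"

definition sorted_entries :: "quad \<Rightarrow> int list" where
  "sorted_entries v = sort [v $ 0, v $ 1, v $ 2, v $ 3]"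

definition exc_cond :: "quad \<Rightarrow> bool" where
  "exc_cond v \<longleftrightarrow> (let s = sorted_entries v in
      s ! 0 + s ! 1 + s ! 2 \<le> 0 \<and> 0 < s ! 3)"

text \<open>For L(v) < 0, v is exceptional iff (-d,-c,-b,-a), i.e. -v reordered, is.\<close>
definition exceptional :: "quad \<Rightarrow> bool" where
  "exceptional v \<longleftrightarrow> reduced v \<and>
     (if LL v \<ge> 0 then exc_cond v else (reduced (- v) \<and> exc_cond (- v)))"

end

theory Submission
  imports Defs
begin

text \<open>Applying \<open>S\<^sub>j\<close> changes \<open>L\<close> from \<open>L(\<^bold>a)\<close> to \<open>3L(\<^bold>a) - 4a\<^sub>j\<close>. An exceptional
  quadruple with \<open>L \<ge> 0\<close> has a positive entry \<open>d \<ge> L\<close>, so \<open>S\<close> at \<open>d\<close> makes \<open>L\<close> negative;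
  if \<open>L = 0\<close> some entry is negative and \<open>S\<close> there makes \<open>L\<close> positive. Negation commutes
  with the group, which handles \<open>L < 0\<close>. From \<open>0 \<le> L \<le> d\<close> we get
  \<open>Q\<^sub>\<D> = 2H\<^sup>2 - L\<^sup>2 \<ge> 2H\<^sup>2 - d\<^sup>2 \<ge> H\<^sup>2 \<ge> 1\<close>, which bounds all entries and hence gives
  finiteness. Finally \<open>S\<^sub>4\<close> swaps the two exceptional quadruples \<open>\<plusminus>(0,0,0,1)\<close>.\<close>

lemma Smat_mult_nth:
  "(Smat j *v v) $ i = (if i = j then 2 * (LL v - v $ j) - v $ j else v $ i)"
proof (cases "i = j")
  case True
  have "(Smat j *v v) $ i = (\<Sum>k\<in>UNIV. 2 * v $ k - (if k = j then 3 * v $ k else 0))"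
    unfolding matrix_vector_mult_def Smat_def using True by (auto intro!: sum.cong)
  also have "\<dots> = 2 * LL v - 3 * v $ j"
    by (simp add: sum_subtractf LL_def sum_distrib_left[symmetric])
  finally show ?thesis using True by simp
next
  case False
  have "(Smat j *v v) $ i = (\<Sum>k\<in>UNIV. (if i = k then 1 else 0) * v $ k)"
    unfolding matrix_vector_mult_def Smat_def using False by simp
  also have "\<dots> = (\<Sum>k\<in>UNIV. if i = k then v $ k else 0)"
    by (intro sum.cong) auto
  finally show ?thesis using False by simp
qed

lemma LL_Smat_mult: "LL (Smat j *v v) = 3 * LL v - 4 * v $ j"
proof -
  have "LL (Smat j *v v) = (\<Sum>i\<in>UNIV. v $ i + (if i = j then 2 * LL v - 4 * v $ j else 0))"
    unfolding LL_def Smat_mult_nth by (auto intro!: sum.cong)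
  also have "\<dots> = 3 * LL v - 4 * v $ j"
    by (simp add: sum.distrib LL_def[symmetric])
  finally show ?thesis .
qed

lemma LL_uminus [simp]: "LL (- v) = - LL v"
  by (simp add: LL_def sum_negf)

lemma QD_uminus [simp]: "QD (- v) = QD v"
  by (simp add: QD_def sum_negf)

lemma matrix_vector_mult_uminus: "A *v (- x) = - (A *v (x :: 'a :: ring_1 ^ 'n))"
  by (simp add: vec_eq_iff matrix_vector_mult_def sum_negf)

lemma reduced_uminus [simp]: "reduced (- v) \<longleftrightarrow> reduced v"
  by (simp add: reduced_def norm1_def matrix_vector_mult_uminus)

lemma apollonian_group_mult_closed:
  assumes "U \<in> apollonian_group" "V \<in> apollonian_group"
  shows "U ** V \<in> apollonian_group"
  using assms
proof (induction U rule: apollonian_group.induct)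
  case id_in
  then show ?case by simp
next
  case (step U i)
  then show ?case by (metis apollonian_group.step matrix_mul_assoc)
qed

lemma orbit_refl: "v \<in> orbit v"
  unfolding orbit_def using apollonian_group.id_in by force

lemma orbit_Smat_closed: "w \<in> orbit v \<Longrightarrow> Smat j *v w \<in> orbit v"
  unfolding orbit_def by (auto simp: matrix_vector_mul_assoc intro: apollonian_group.step)

lemma orbit_trans: "w \<in> orbit v \<Longrightarrow> orbit w \<subseteq> orbit v"
  unfolding orbit_def
  by (auto simp: matrix_vector_mul_assoc intro: apollonian_group_mult_closed)

lemma orbit_uminus: "orbit (- v) = uminus ` orbit v"
  unfolding orbit_def by (auto simp: matrix_vector_mult_uminus)

lemma sum_list_sorted_entries: "sum_list (sorted_entries v) = LL v"
proof -
  have "sum_list (sorted_entries v) = sum_list [v $ 0, v $ 1, v $ 2, v $ 3]"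
    unfolding sorted_entries_def by (metis mset_sort sum_mset_sum_list)
  also have "\<dots> = LL v"
  proof -
    have four: "(4 :: 4) = 0"
      by simp
    show ?thesis
      using sum_4[of "\<lambda>i. v $ i"] unfolding four by (simp add: LL_def ac_simps)
  qed
  finally show ?thesis .
qed

lemma exc_cond_large_entry:
  assumes "exc_cond v"
  obtains j where "0 < v $ j" "LL v \<le> v $ j"
proof -
  define s where "s = sorted_entries v"
  have len: "length s = 4"
    by (simp add: s_def sorted_entries_def)
  then have "s ! 3 \<in> set s"
    by simp
  then have "s ! 3 \<in> set [v $ 0, v $ 1, v $ 2, v $ 3]"
    by (simp add: s_def sorted_entries_def)
  then obtain j where j: "v $ j = s ! 3"
    by auto
  have "LL v = s ! 0 + s ! 1 + s ! 2 + s ! 3"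
    using len sum_list_sorted_entries[of v]
    by (cases s rule: list.exhaust) (auto simp: s_def length_Suc_conv numeral_eq_Suc)
  moreover have "s ! 0 + s ! 1 + s ! 2 \<le> 0" "0 < s ! 3"
    using assms unfolding exc_cond_def s_def Let_def by auto
  ultimately show thesis
    using j by (intro that[of j]) auto
qed

lemma exceptional_normalize:
  assumes "exceptional w"
  obtains u where "w = u \<or> w = - u" "exc_cond u" "0 \<le> LL u"
  using assms that[of w] that[of "- w"] unfolding exceptional_def
  by (cases "0 \<le> LL w") auto

lemma exc_cond_orbit_both_signs:
  assumes "exc_cond u" "0 \<le> LL u"
  shows "(\<exists>x\<in>orbit u. 0 < LL x) \<and> (\<exists>y\<in>orbit u. LL y < 0)"
proof
  obtain j where j: "0 < u $ j" "LL u \<le> u $ j"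
    using assms(1) by (rule exc_cond_large_entry)
  have "LL (Smat j *v u) < 0"
    using j assms(2) by (simp add: LL_Smat_mult)
  then show "\<exists>y\<in>orbit u. LL y < 0"
    using orbit_Smat_closed[OF orbit_refl] by blast
  show "\<exists>x\<in>orbit u. 0 < LL x"
  proof (cases "LL u = 0")
    case True
    have "\<exists>i. u $ i < 0"
    proof (rule ccontr)
      assume "\<nexists>i. u $ i < 0"
      then have "u $ j \<le> LL u"
        unfolding LL_def by (intro member_le_sum) (auto simp: not_less)
      then show False
        using j True by simp
    qed
    then obtain i where "u $ i < 0"
      by blast
    then have "0 < LL (Smat i *v u)"
      using True by (simp add: LL_Smat_mult)
    then show ?thesis
      using orbit_Smat_closed[OF orbit_refl] by blast
  next
    case False
    then show ?thesis
      using assms(2) orbit_refl by force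
  qed
qed

lemma exceptional_orbit_both_signs:
  assumes "exceptional w"
  shows "(\<exists>x\<in>orbit w. 0 < LL x) \<and> (\<exists>y\<in>orbit w. LL y < 0)"
proof -
  obtain u where u: "w = u \<or> w = - u" "exc_cond u" "0 \<le> LL u"
    using assms by (rule exceptional_normalize)
  have "(\<exists>x\<in>orbit u. 0 < LL x) \<and> (\<exists>y\<in>orbit u. LL y < 0)"
    using u(2,3) by (rule exc_cond_orbit_both_signs)
  then show ?thesis
    using u(1) by (auto simp: orbit_uminus)
qed

definition sumsq :: "int ^ 'n \<Rightarrow> int" where
  "sumsq v = (\<Sum>i\<in>UNIV. (v $ i)\<^sup>2)"

lemma nth_squared_le_sumsq: "(v $ i)\<^sup>2 \<le> sumsq v"
  unfolding sumsq_def by (rule member_le_sum) auto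

lemma QD_eq_sumsq: "QD v = 2 * sumsq v - (LL v)\<^sup>2"
  by (simp add: QD_def sumsq_def LL_def)

lemma Hh_squared_eq_sumsq: "(Hh v)\<^sup>2 = real_of_int (sumsq v)"
  unfolding Hh_def sumsq_def by (simp add: sum_nonneg)

lemma abs_le_square_int: "\<bar>x\<bar> \<le> (x :: int)\<^sup>2"
proof -
  have "\<bar>x\<bar> * 1 \<le> \<bar>x\<bar> * \<bar>x\<bar>" if "x \<noteq> 0"
    using that by (intro mult_left_mono) auto
  then show ?thesis
    by (cases "x = 0") (auto simp: power2_eq_square)
qed

lemma finite_sumsq_le: "finite {v :: int ^ 'n. sumsq v \<le> k}"
proof (rule finite_subset)
  show "{v :: int ^ 'n. sumsq v \<le> k} \<subseteq> vec_lambda ` (UNIV \<rightarrow>\<^sub>E {-k..k})"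
  proof
    fix v :: "int ^ 'n"
    assume "v \<in> {v. sumsq v \<le> k}"
    then have "\<bar>v $ i\<bar> \<le> k" for i
      using abs_le_square_int[of "v $ i"] nth_squared_le_sumsq[of v i] by simp
    then have "v $ i \<in> {-k..k}" for i
      by (simp add: abs_le_iff) (metis minus_le_iff)
    then have "(\<lambda>i. v $ i) \<in> UNIV \<rightarrow>\<^sub>E {-k..k}"
      by (simp add: PiE_iff)
    then show "v \<in> vec_lambda ` (UNIV \<rightarrow>\<^sub>E {-k..k})"
      by (metis image_eqI vec_lambda_eta)
  qed
  show "finite (vec_lambda ` (UNIV \<rightarrow>\<^sub>E {-k..k :: int}) :: (int ^ 'n) set)"
    by (intro finite_imageI finite_PiE) auto
qed

lemma exceptional_sumsq_le_QD:
  assumes "exceptional a"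
  shows "1 \<le> sumsq a \<and> sumsq a \<le> QD a"
proof -
  obtain u where u: "a = u \<or> a = - u" "exc_cond u" "0 \<le> LL u"
    using assms by (rule exceptional_normalize)
  obtain j where j: "0 < u $ j" "LL u \<le> u $ j"
    using u(2) by (rule exc_cond_large_entry)
  have "(LL u)\<^sup>2 \<le> (u $ j)\<^sup>2"
    using j u(3) by (intro power_mono) auto
  moreover have "1 \<le> (u $ j)\<^sup>2"
    using j by (simp add: one_le_power)
  ultimately have "1 \<le> sumsq u \<and> sumsq u \<le> QD u"
    using nth_squared_le_sumsq[of u j] unfolding QD_eq_sumsq by linarith
  moreover have "sumsq (- u) = sumsq u"
    by (simp add: sumsq_def)
  ultimately show ?thesis
    using u(1) by auto
qed

lemma LL_axis [simp]: "LL (axis i x :: quad) = x"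
  by (simp add: LL_def axis_def)

lemma norm1_axis [simp]: "norm1 (axis i x :: quad) = \<bar>x\<bar>"
  by (simp add: norm1_def axis_def if_distrib cong: if_cong)

lemma Smat_mult_axis_unit: "Smat i *v axis i 1 = - (axis i 1 :: quad)"
  by (simp add: vec_eq_iff Smat_mult_nth) (simp add: axis_def)

text \<open>No \<open>S\<^sub>j\<close> can clear the nonzero entry of a unit vector.\<close>

lemma reduced_axis_unit: "reduced (axis i 1 :: quad)"
  unfolding reduced_def
proof
  fix j
  have "\<bar>(Smat j *v axis i 1) $ i\<bar> = 1"
    by (simp add: Smat_mult_nth)
  moreover have "\<bar>(Smat j *v axis i 1) $ i\<bar> \<le> norm1 (Smat j *v axis i 1)"
    unfolding norm1_def by (rule member_le_sum) auto
  ultimately show "\<not> norm1 (Smat j *v axis i 1) < norm1 (axis i 1 :: quad)"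
    by simp
qed

lemma exceptional_axis_3: "exceptional (axis 3 1 :: quad)"
  and exceptional_uminus_axis_3: "exceptional (- axis 3 1 :: quad)"
proof -
  have "exc_cond (axis 3 1 :: quad)"
    by (simp add: exc_cond_def sorted_entries_def axis_def)
  then show "exceptional (axis 3 1 :: quad)" "exceptional (- axis 3 1 :: quad)"
    unfolding exceptional_def by (simp_all add: reduced_axis_unit)
qed

lemma orbit_axis_3_two_exceptional:
  "\<exists>w1\<in>orbit (axis 3 1 :: quad). \<exists>w2\<in>orbit (axis 3 1). w1 \<noteq> w2 \<and> exceptional w1 \<and> exceptional w2"
proof -
  let ?e = "axis 3 1 :: quad"
  have "- ?e \<in> orbit ?e"
    using orbit_Smat_closed[OF orbit_refl, of 3 ?e] by (simp add: Smat_mult_axis_unit)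
  moreover have "?e \<noteq> - ?e"
    by (metis LL_axis LL_uminus one_neq_neg_one)
  ultimately show ?thesis
    using orbit_refl[of ?e] exceptional_axis_3 exceptional_uminus_axis_3 by blast
qed

lemma finite_exceptional_QD_eq: "finite {a. exceptional a \<and> QD a = k}"
proof -
  have "{a. exceptional a \<and> QD a = k} \<subseteq> {a. sumsq a \<le> k}"
    using exceptional_sumsq_le_QD by fastforce
  then show ?thesis
    using finite_sumsq_le by (rule finite_subset)
qed

lemma Hh_squared_le_QD:
  assumes "exceptional a"
  shows "(Hh a)\<^sup>2 \<le> real_of_int (QD a)"
  using exceptional_sumsq_le_QD[OF assms] by (simp add: Hh_squared_eq_sumsq)

theorem theorem3p4:
  shows "(\<forall>v::quad. v \<noteq> 0 \<longrightarrow> (\<exists>w\<in>orbit v. exceptional w) \<longrightarrow>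
            (\<exists>v1\<in>orbit v. LL v1 > 0) \<and> (\<exists>v2\<in>orbit v. LL v2 < 0))
       \<and> (\<exists>v::quad. v \<noteq> 0 \<and>
            (\<exists>w1\<in>orbit v. \<exists>w2\<in>orbit v. w1 \<noteq> w2 \<and> exceptional w1 \<and> exceptional w2))
       \<and> (\<forall>a::quad. exceptional a \<longrightarrow> QD a \<ge> 1)
       \<and> (\<forall>k::int. k \<ge> 1 \<longrightarrow>
            finite {a::quad. exceptional a \<and> QD a = k} \<and>
            (\<forall>a::quad. exceptional a \<and> QD a = k \<longrightarrow> (Hh a)^2 \<le> 2 * (real_of_int k)^2))"
proof (intro conjI)
  show "\<forall>v::quad. v \<noteq> 0 \<longrightarrow> (\<exists>w\<in>orbit v. exceptional w) \<longrightarrow>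
      (\<exists>v1\<in>orbit v. LL v1 > 0) \<and> (\<exists>v2\<in>orbit v. LL v2 < 0)"
    using exceptional_orbit_both_signs orbit_trans by blast
  show "\<exists>v::quad. v \<noteq> 0 \<and>
      (\<exists>w1\<in>orbit v. \<exists>w2\<in>orbit v. w1 \<noteq> w2 \<and> exceptional w1 \<and> exceptional w2)"
    using orbit_axis_3_two_exceptional by (intro exI[of _ "axis 3 1"]) simp
  show "\<forall>a::quad. exceptional a \<longrightarrow> QD a \<ge> 1"
    using exceptional_sumsq_le_QD by fastforce
  show "\<forall>k::int. k \<ge> 1 \<longrightarrow> finite {a::quad. exceptional a \<and> QD a = k} \<and>
      (\<forall>a::quad. exceptional a \<and> QD a = k \<longrightarrow> (Hh a)^2 \<le> 2 * (real_of_int k)^2)"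
  proof (intro allI impI conjI finite_exceptional_QD_eq)
    fix k :: int and a :: quad
    assume "1 \<le> k" and "exceptional a \<and> QD a = k"
    moreover have "real_of_int k \<le> 2 * (real_of_int k)\<^sup>2"
      using \<open>1 \<le> k\<close> by (simp add: power2_eq_square)
    ultimately show "(Hh a)\<^sup>2 \<le> 2 * (real_of_int k)\<^sup>2"
      using Hh_squared_le_QD[of a] by auto
  qed
qed

end
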